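(* For $n\ge3$ and $k\ge1$ let $W_n^k=C_n+\epsilon_k$. Then: $\dim W_6^1=2$ and $\dim W_n^1=3$ for $n\ne6$; $\dim W_6^2=4$ and $\dim W_n^2=3$ for $n\neq 6$; for every $k\ge3$, $\dim W_6^k=5$ and $\dim W_n^k=4$ for $n\ne6$.
   Context: $C_n$ is the cycle on $n$ vertices and $\epsilon_k$ the graph with $k$ vertices and no edges. The sum $G+H$ is obtained from disjoint copies of $G$ and $H$ by adding all edges between a vertex of $G$ and a vertex of $H$. A unit-distance embedding of a graph $G$ in $\mathbb{R}^n$ is an injective map $f$ from the vertex set of $G$ to $\mathbb{R}^n$ such that $|f(u)-f(v)|=1$ for every edge $uv$ and no point $f(w)$ lies on the segment $[f(u),f(v)]$ for an edge $uv$ with $w\notin\{u,v\}$ (edges may cross one another). The dimension $\dim G$ is the least natural number $n$ such that $G$ has a unit-distance embedding in $\mathbb{R}^n$. *)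

theory Defs
  imports Complex_Main
begin

type_synonym 'a graph = "'a set \<times> ('a \<Rightarrow> 'a \<Rightarrow> bool)"

definition verts :: "'a graph \<Rightarrow> 'a set" where "verts G = fst G"
definition adj :: "'a graph \<Rightarrow> 'a \<Rightarrow> 'a \<Rightarrow> bool" where "adj G = snd G"

definition cycle_graph :: "nat \<Rightarrow> nat graph" where
  "cycle_graph n = ({0..<n}, \<lambda>i j. i \<in> {0..<n} \<and> j \<in> {0..<n} \<and> i \<noteq> j \<and>
       (j = (i + 1) mod n \<or> i = (j + 1) mod n))"

definition empty_graph :: "nat \<Rightarrow> nat graph" where
  "empty_graph k = ({0..<k}, \<lambda>i j. False)"

definition graph_join :: "'a graph \<Rightarrow> 'b graph \<Rightarrow> ('a + 'b) graph" where
  "graph_join G H = (Inl ` verts G \<union> Inr ` verts H,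
     \<lambda>x y. (case (x, y) of
        (Inl a, Inl b) \<Rightarrow> adj G a b
      | (Inr a, Inr b) \<Rightarrow> adj H a b
      | (Inl a, Inr b) \<Rightarrow> a \<in> verts G \<and> b \<in> verts H
      | (Inr a, Inl b) \<Rightarrow> a \<in> verts H \<and> b \<in> verts G))"

definition wheel :: "nat \<Rightarrow> nat \<Rightarrow> (nat + nat) graph" where
  "wheel n k = graph_join (cycle_graph n) (empty_graph k)"

text \<open>Points of R^d are represented as functions nat => real vanishing at coordinates >= d.\<close>
definition in_Rn :: "nat \<Rightarrow> (nat \<Rightarrow> real) \<Rightarrow> bool" where
  "in_Rn d x \<longleftrightarrow> (\<forall>i\<ge>d. x i = 0)"

definition edist :: "nat \<Rightarrow> (nat \<Rightarrow> real) \<Rightarrow> (nat \<Rightarrow> real) \<Rightarrow> real" where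
  "edist d x y = sqrt (\<Sum>i<d. (x i - y i)^2)"

definition on_segment :: "(nat \<Rightarrow> real) \<Rightarrow> (nat \<Rightarrow> real) \<Rightarrow> (nat \<Rightarrow> real) \<Rightarrow> bool" where
  "on_segment p a b \<longleftrightarrow> (\<exists>t::real. 0 \<le> t \<and> t \<le> 1 \<and> p = (\<lambda>i. (1 - t) * a i + t * b i))"

definition unit_dist_embedding :: "'a graph \<Rightarrow> nat \<Rightarrow> ('a \<Rightarrow> nat \<Rightarrow> real) \<Rightarrow> bool" where
  "unit_dist_embedding G d f \<longleftrightarrow>
     (\<forall>v\<in>verts G. in_Rn d (f v)) \<and> inj_on f (verts G) \<and>
     (\<forall>u\<in>verts G. \<forall>v\<in>verts G. adj G u v \<longrightarrow> edist d (f u) (f v) = 1) \<and>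
     (\<forall>u\<in>verts G. \<forall>v\<in>verts G. \<forall>w\<in>verts G. adj G u v \<and> w \<noteq> u \<and> w \<noteq> v
         \<longrightarrow> \<not> on_segment (f w) (f u) (f v))"

definition graph_dim :: "'a graph \<Rightarrow> nat" where
  "graph_dim G = (LEAST d. \<exists>f. unit_dist_embedding G d f)"

end

(*
  In a unit-distance embedding every rim vertex is at distance 1 from every
  hub.  In the plane the rim therefore lies on the unit circle around the hub, where a closed
  walk with unit steps that never immediately turns back turns by pi/3 at each step and closes
  up only after 6 steps.  Two hubs in R^3, or three hubs in R^4, confine the rim to a circle of
  radius less than 1, on which a closed unit walk of length 6 is a triangle run twice.  With
  three hubs, differences of rim vertices are orthogonal to differences of hubs and each family
  spans a plane, so the wheel does not fit into R^3.

  Put the rim on a sphere of squared radius R < 1 in the first coordinates and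
  the hubs on a sphere of squared radius 1 - R in the remaining ones: two antipodal points
  for at most two hubs, a circle otherwise.  For n other than 6 the rim is a regular star
  polygon {n/s} with unit sides and n/6 < s <= n/2, whose circumradius is less than 1.  For
  n = 6 only s = 1 is possible, with circumradius 1: a single hub sits at the centre of the
  regular hexagon, and more hubs need the skew hexagon on a cube, one dimension higher.
*)
theory Submission
  imports Defs "HOL-Analysis.Analysis"
begin

section \<open>Unit-distance embeddings\<close>

lemma edist_commute: "edist d x y = edist d y x"
  unfolding edist_def by (simp add: power2_commute)

lemma on_segment_commute: "on_segment p a b \<Longrightarrow> on_segment p b a"
proof -
  assume "on_segment p a b"
  then obtain t where t: "0 \<le> t" "t \<le> 1" "p = (\<lambda>i. (1 - t) * a i + t * b i)"
    unfolding on_segment_def by blast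
  have "p = (\<lambda>i. (1 - (1 - t)) * b i + (1 - t) * a i)"
    using t(3) by (simp add: algebra_simps)
  with t(1,2) show ?thesis
    unfolding on_segment_def by (intro exI[of _ "1 - t"]) auto
qed

lemma in_Rn_mono: "in_Rn d x \<Longrightarrow> d \<le> D \<Longrightarrow> in_Rn D x"
  by (auto simp: in_Rn_def)

lemma sum_power2_in_Rn:
  assumes "in_Rn d x" "d \<le> D"
  shows "(\<Sum>l<D. (x l)\<^sup>2) = (\<Sum>l<d. (x l)\<^sup>2)"
  by (rule sum.mono_neutral_right) (use assms in \<open>auto simp: in_Rn_def\<close>)

lemma edist_in_Rn:
  assumes "in_Rn d x" "in_Rn d y" "d \<le> D"
  shows "edist D x y = edist d x y"
proof -
  have "(\<Sum>i<D. (x i - y i)\<^sup>2) = (\<Sum>i<d. (x i - y i)\<^sup>2)"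
    by (rule sum.mono_neutral_right) (use assms in \<open>auto simp: in_Rn_def\<close>)
  thus ?thesis by (simp add: edist_def)
qed

lemma unit_dist_embedding_mono:
  assumes "unit_dist_embedding G d f" "d \<le> D"
  shows "unit_dist_embedding G D f"
  using assms edist_in_Rn[OF _ _ assms(2)] in_Rn_mono[OF _ assms(2)]
  unfolding unit_dist_embedding_def by metis

lemma graph_dim_eqI:
  assumes "\<exists>f. unit_dist_embedding G D f" "\<And>f. \<not> unit_dist_embedding G (D - 1) f" "D \<ge> 1"
  shows "graph_dim G = D"
  unfolding graph_dim_def
proof (rule Least_equality)
  show "\<exists>f. unit_dist_embedding G D f" by (rule assms(1))
next
  fix d assume "\<exists>f. unit_dist_embedding G d f"
  then obtain g where g: "unit_dist_embedding G d g" by blast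
  show "D \<le> d"
  proof (rule ccontr)
    assume "\<not> D \<le> d"
    hence "d \<le> D - 1" by simp
    from unit_dist_embedding_mono[OF g this] assms(2) show False by blast
  qed
qed

type_synonym R4 = "real \<times> real \<times> real \<times> real"

definition vec4 :: "(nat \<Rightarrow> real) \<Rightarrow> R4" where
  "vec4 x = (x 0, x 1, x 2, x 3)"

definition e2 :: R4 where "e2 = (0, 0, 1, 0)"
definition e3 :: R4 where "e3 = (0, 0, 0, 1)"

lemma inner_R4:
  "inner (a::R4) b = fst a * fst b + fst (snd a) * fst (snd b)
     + fst (snd (snd a)) * fst (snd (snd b)) + snd (snd (snd a)) * snd (snd (snd b))"
  by (cases a; cases b) (auto simp: inner_Pair)

lemma edist_eq_dist_vec4:
  assumes "in_Rn d x" "in_Rn d y" "d \<le> 4"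
  shows "edist d x y = dist (vec4 x) (vec4 y)"
proof -
  have "(dist (vec4 x) (vec4 y))\<^sup>2 = inner (vec4 x - vec4 y) (vec4 x - vec4 y)"
    by (simp add: dist_norm power2_norm_eq_inner)
  also have "\<dots> = (\<Sum>i<4. (x i - y i)\<^sup>2)"
    by (simp add: inner_R4 vec4_def eval_nat_numeral power2_eq_square)
  finally have "edist 4 x y = dist (vec4 x) (vec4 y)"
    unfolding edist_def by (metis real_sqrt_unique zero_le_dist)
  thus ?thesis using edist_in_Rn[OF assms] by simp
qed

lemma vec4_inject:
  assumes "in_Rn 4 x" "in_Rn 4 y" "vec4 x = vec4 y"
  shows "x = y"
proof
  fix i show "x i = y i"
  proof (cases "i < 4")
    case True
    hence "i = 0 \<or> i = 1 \<or> i = 2 \<or> i = 3" by auto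
    thus ?thesis using assms(3) by (auto simp: vec4_def)
  qed (use assms(1,2) in \<open>simp add: in_Rn_def\<close>)
qed

lemma e2_nonzero: "e2 \<noteq> 0" and e3_nonzero: "e3 \<noteq> 0" and inner_e2_e3: "inner e2 e3 = 0"
  by (simp_all add: e2_def e3_def inner_R4 zero_prod_def)

lemma inner_vec4_e2: "in_Rn 2 x \<Longrightarrow> inner (vec4 x) e2 = 0"
  by (simp add: in_Rn_def vec4_def e2_def inner_R4)

lemma inner_vec4_e3: "in_Rn 3 x \<Longrightarrow> inner (vec4 x) e3 = 0"
  by (simp add: in_Rn_def vec4_def e3_def inner_R4)

section \<open>Inner-product geometry\<close>

lemma dist_diff_cancel: "dist (a - c) (b - c) = dist a (b::'a::real_normed_vector)"
  by (simp add: dist_norm)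

lemma dist_eq_1_iff_inner: "dist (a::'a::real_inner) b = 1 \<longleftrightarrow> inner (a - b) (a - b) = 1"
  by (metis dist_norm norm_eq_1)

lemma inner_of_unit_dist:
  fixes a b :: "'a::real_inner"
  assumes "dist a b = 1"
  shows "2 * inner a b = inner a a + inner b b - 1"
  using assms unfolding dist_eq_1_iff_inner
  by (simp add: inner_diff_left inner_diff_right inner_commute)

lemma inner_of_unit_chord:
  fixes a b :: "'a::real_inner"
  assumes "inner a a = R" "inner b b = R" "dist a b = 1"
  shows "inner a b = R - 1/2"
  using inner_of_unit_dist[OF assms(3)] assms(1,2) by simp

lemma inner_of_common_unit_neighbour:
  fixes p h h' :: "'a::real_inner"
  assumes "dist p h = 1" "dist p h' = 1"
  shows "inner (p - h) (h' - h) = inner (h' - h) (h' - h) / 2"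
  using inner_of_unit_dist[OF assms(1)] inner_of_unit_dist[OF assms(2)]
  by (simp add: inner_diff_left inner_diff_right inner_commute algebra_simps)

lemma common_unit_neighbours_orthogonal:
  fixes p q h h' :: "'a::real_inner"
  assumes "dist p h = 1" "dist p h' = 1" "dist q h = 1" "dist q h' = 1"
  shows "inner (q - p) (h' - h) = 0"
  using inner_of_unit_dist[OF assms(1)] inner_of_unit_dist[OF assms(2)]
    inner_of_unit_dist[OF assms(3)] inner_of_unit_dist[OF assms(4)]
  by (simp add: inner_diff_left inner_diff_right inner_commute algebra_simps)

lemma inner_diff_projection:
  "(u::'a::real_inner) \<noteq> 0 \<Longrightarrow> inner u (v - (inner v u / inner u u) *\<^sub>R u) = 0"
  by (simp add: inner_diff_right inner_commute)

text \<open>Non-collinearity of three distinct points of a unit sphere, in Gram-Schmidt form.\<close>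
lemma unit_sphere_not_collinear:
  fixes p a b c :: "'a::real_inner"
  assumes "dist p a = 1" "dist p b = 1" "dist p c = 1" "c \<noteq> a" "c \<noteq> b" "b \<noteq> a"
  shows "(c - a) - (inner (c - a) (b - a) / inner (b - a) (b - a)) *\<^sub>R (b - a) \<noteq> 0"
proof
  define u where "u = b - a"
  define t where "t = inner (c - a) (b - a) / inner (b - a) (b - a)"
  define g where "g = a - p"
  assume "(c - a) - (inner (c - a) (b - a) / inner (b - a) (b - a)) *\<^sub>R (b - a) = 0"
  hence c: "c = a + t *\<^sub>R u" by (simp add: t_def u_def algebra_simps)
  have sq: "\<And>q. dist p q = 1 \<Longrightarrow> inner (q - p) (q - p) = 1"
    by (metis dist_commute dist_eq_1_iff_inner)
  have "inner g g = 1" using sq[OF assms(1)] by (simp add: g_def)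
  moreover have "inner (g + u) (g + u) = 1" using sq[OF assms(2)] by (simp add: g_def u_def)
  moreover have "inner (g + t *\<^sub>R u) (g + t *\<^sub>R u) = 1"
    using sq[OF assms(3)] c by (simp add: g_def algebra_simps)
  ultimately have "inner g u = - inner u u / 2" "2 * t * inner g u + t * t * inner u u = 0"
    by (simp_all add: inner_add_left inner_add_right inner_commute algebra_simps)
  hence "(t * t - t) * inner u u = 0" by (simp add: algebra_simps)
  moreover have "inner u u \<noteq> 0" using assms(6) by (simp add: u_def)
  ultimately have "t = 0 \<or> t = 1" by simp
  thus False using c assms(4,5) by (auto simp: u_def)
qed

lemma five_pairwise_orthogonal_impossible:
  fixes a b c d e :: "'a::euclidean_space"
  assumes "DIM('a) \<le> 4"
    and nz: "a \<noteq> 0" "b \<noteq> 0" "c \<noteq> 0" "d \<noteq> 0" "e \<noteq> 0"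
    and o: "inner a b = 0" "inner a c = 0" "inner a d = 0" "inner a e = 0"
      "inner b c = 0" "inner b d = 0" "inner b e = 0" "inner c d = 0" "inner c e = 0"
      "inner d e = 0"
  shows False
proof -
  let ?S = "{a, b, c, d, e}"
  have ne: "\<And>x y::'a. x \<noteq> 0 \<Longrightarrow> inner x y = 0 \<Longrightarrow> x \<noteq> y" by auto
  have "pairwise orthogonal ?S"
    using o by (auto simp: pairwise_def orthogonal_def inner_commute)
  moreover have "0 \<notin> ?S" using nz by auto
  ultimately have "card ?S \<le> DIM('a)"
    by (intro independent_card_le pairwise_orthogonal_independent)
  moreover have "card ?S = 5"
    using ne[OF nz(1) o(1)] ne[OF nz(1) o(2)] ne[OF nz(1) o(3)] ne[OF nz(1) o(4)]
      ne[OF nz(2) o(5)] ne[OF nz(2) o(6)] ne[OF nz(2) o(7)] ne[OF nz(3) o(8)]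
      ne[OF nz(3) o(9)] ne[OF nz(4) o(10)] by simp
  ultimately show False using assms(1) by simp
qed

lemma eq_or_reflection_in_plane:
  fixes E1 E2 x y z :: "'a::euclidean_space"
  assumes "DIM('a) \<le> 4"
    and nz: "E1 \<noteq> 0" "E2 \<noteq> 0" "x \<noteq> 0" and E: "inner E1 E2 = 0"
    and x: "inner x E1 = 0" "inner x E2 = 0"
    and y: "inner y E1 = 0" "inner y E2 = 0"
    and z: "inner z E1 = 0" "inner z E2 = 0"
    and norm: "inner y y = inner z z" and proj: "inner y x = inner z x"
  shows "z = y \<or> z = (2 * inner y x / inner x x) *\<^sub>R x - y"
proof (rule ccontr)
  assume H: "\<not> ?thesis"
  define m where "m = 2 * inner y x / inner x x"
  define w where "w = z - y"
  define v where "v = z + y - m *\<^sub>R x"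
  have "w \<noteq> 0" "v \<noteq> 0" using H by (auto simp: w_def v_def m_def algebra_simps)
  moreover have "inner E1 w = 0" "inner E2 w = 0" "inner E1 v = 0" "inner E2 v = 0"
    using x y z by (simp_all add: w_def v_def inner_diff_right inner_add_right inner_commute)
  moreover have "inner x w = 0" using proj by (simp add: w_def inner_diff_right inner_commute)
  moreover have "inner x v = 0"
    using proj nz(3) by (simp add: v_def m_def inner_diff_right inner_add_right inner_commute)
  moreover have "inner w v = 0"
    using norm proj by (simp add: w_def v_def inner_diff_right inner_add_right inner_diff_left
        inner_add_left inner_commute algebra_simps)
  moreover have "inner E1 x = 0" "inner E2 x = 0" using x by (simp_all add: inner_commute)
  ultimately show False
    using five_pairwise_orthogonal_impossible[OF assms(1) nz(1,2,3), of w v] E by blast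
qed

section \<open>Closed unit walks on circles\<close>

lemma circle_walk_recurrence:
  fixes x :: "nat \<Rightarrow> 'a::euclidean_space"
  assumes "DIM('a) \<le> 4" and E: "E1 \<noteq> 0" "E2 \<noteq> 0" "inner E1 E2 = 0"
    and perp: "\<And>j. inner (x j) E1 = 0" "\<And>j. inner (x j) E2 = 0"
    and norm: "\<And>j. inner (x j) (x j) = R"
    and step: "\<And>j. dist (x j) (x (j + 1)) = 1"
    and no_backtrack: "\<And>j. x (j + 2) \<noteq> x j"
  shows "R > 0" and "x (j + 2) = (2 * (R - 1/2) / R) *\<^sub>R x (j + 1) - x j"
proof -
  show R: "R > 0"
  proof (rule ccontr)
    assume "\<not> R > 0"
    with norm[of 0] have "R = 0" by (metis inner_ge_zero order_antisym_conv not_less)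
    hence "x 0 = 0" "x 1 = 0" using norm[of 0] norm[of 1] by auto
    thus False using step[of 0] by simp
  qed
  have nz: "x (j + 1) \<noteq> 0" using norm[of "j + 1"] R by auto
  have prev: "inner (x j) (x (j + 1)) = R - 1/2"
    by (rule inner_of_unit_chord[OF norm norm step])
  have succ: "inner (x (j + 2)) (x (j + 1)) = R - 1/2"
    using inner_of_unit_chord[OF norm norm step[of "j + 1"]] by (simp add: inner_commute add.assoc)
  have "x (j + 2) = x j \<or>
      x (j + 2) = (2 * inner (x j) (x (j + 1)) / inner (x (j + 1)) (x (j + 1))) *\<^sub>R x (j + 1) - x j"
    by (rule eq_or_reflection_in_plane[OF assms(1) E(1,2) nz E(3) perp perp perp])
      (use norm prev succ in simp_all)
  thus "x (j + 2) = (2 * (R - 1/2) / R) *\<^sub>R x (j + 1) - x j"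
    using no_backtrack[of j] prev norm by simp
qed

text \<open>On the unit circle the walk turns by \<open>\<pi>/3\<close> at every step, so it has period 6.\<close>
lemma unit_circle_closed_walk_length:
  fixes x :: "nat \<Rightarrow> 'a::euclidean_space"
  assumes "DIM('a) \<le> 4" and E: "E1 \<noteq> 0" "E2 \<noteq> 0" "inner E1 E2 = 0"
    and perp: "\<And>j. inner (x j) E1 = 0" "\<And>j. inner (x j) E2 = 0"
    and norm: "\<And>j. inner (x j) (x j) = 1"
    and step: "\<And>j. dist (x j) (x (j + 1)) = 1"
    and no_backtrack: "\<And>j. x (j + 2) \<noteq> x j"
    and period: "\<And>j. x (j + n) = x j"
    and inj: "\<And>i i'. i < n \<Longrightarrow> i' < n \<Longrightarrow> x i = x i' \<Longrightarrow> i = i'"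
    and "n \<ge> 3"
  shows "n = 6"
proof -
  have rec: "\<And>j. x (j + 2) = x (j + 1) - x j"
    using circle_walk_recurrence(2)[OF assms(1) E perp norm step no_backtrack] by simp
  have antiperiod: "x (j + 3) = - x j" for j
  proof -
    have "x (j + 3) = x (j + 2) - x (j + 1)" using rec[of "j + 1"] by (simp add: add.assoc eval_nat_numeral)
    also have "\<dots> = - x j" using rec[of j] by simp
    finally show ?thesis .
  qed
  have nz: "\<And>j. x j \<noteq> 0" using norm by (metis inner_zero_left zero_neq_one)
  consider "n = 3" | "n = 4" | "n = 5" | "n = 6" | "n > 6" using \<open>n \<ge> 3\<close> by linarith
  thus ?thesis
  proof cases
    case 1
    hence "x 3 = x 0" using period[of 0] by simp
    thus ?thesis using antiperiod[of 0] nz[of 0]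
      by (simp add: eq_neg_iff_add_eq_0) (metis scaleR_2 scaleR_eq_0_iff zero_neq_numeral)
  next
    case 2
    hence "x 4 = x 0" using period[of 0] by simp
    moreover have "x 4 = - x 1" using antiperiod[of 1] by simp
    ultimately have "x 1 = - x 0" by (metis minus_minus)
    hence "x 2 = 2 *\<^sub>R x 1" using rec[of 0] by (simp add: scaleR_2 eval_nat_numeral)
    hence "inner (x 2) (x 2) = 4 * inner (x 1) (x 1)" by simp
    thus ?thesis using norm[of 2] norm[of 1] by simp
  next
    case 3
    hence "x 5 = x 0" using period[of 0] by simp
    hence "x 1 = 0" using antiperiod[of 2] rec[of 0] by (simp add: eval_nat_numeral)
    thus ?thesis using nz by blast
  next
    case 5
    have "x 6 = x 0" using antiperiod[of 0] antiperiod[of 3] by simp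
    thus ?thesis using inj[of 6 0] 5 by simp
  qed
qed

fun cheb_coeffs :: "real \<Rightarrow> nat \<Rightarrow> real \<times> real" where
  "cheb_coeffs l 0 = (0, 1)"
| "cheb_coeffs l (Suc 0) = (1, 0)"
| "cheb_coeffs l (Suc (Suc j)) =
     (2 * l * fst (cheb_coeffs l (Suc j)) - fst (cheb_coeffs l j),
      2 * l * snd (cheb_coeffs l (Suc j)) - snd (cheb_coeffs l j))"

lemma linear_recurrence_closed_form:
  fixes x :: "nat \<Rightarrow> 'a::real_vector"
  assumes rec: "\<And>j. x (Suc (Suc j)) = (2 * l) *\<^sub>R x (Suc j) - x j"
  shows "x j = fst (cheb_coeffs l j) *\<^sub>R x 1 + snd (cheb_coeffs l j) *\<^sub>R x 0"
proof -
  have "x j = fst (cheb_coeffs l j) *\<^sub>R x 1 + snd (cheb_coeffs l j) *\<^sub>R x 0 \<and>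
        x (Suc j) = fst (cheb_coeffs l (Suc j)) *\<^sub>R x 1 + snd (cheb_coeffs l (Suc j)) *\<^sub>R x 0"
  proof (induction j)
    case (Suc j)
    then show ?case by (simp add: rec algebra_simps)
  qed simp
  thus ?thesis by simp
qed

text \<open>\<open>A\<close> and \<open>B\<close> are the coefficients in \<open>x 6 - x 0 = A x 1 + B x 0\<close> along a sequence with
  \<open>x (j + 2) = 2 l x (j + 1) - x j\<close>.\<close>
lemma hexagon_recurrence_parameter:
  fixes l :: real
  defines "A \<equiv> 32 * l ^ 5 - 32 * l ^ 3 + 6 * l" and "B \<equiv> - 16 * l ^ 4 + 12 * l\<^sup>2 - 2"
  assumes AB: "A * l + B = 0" "A + B * l = 0" and "l\<^sup>2 \<noteq> 1" "l < 1/2"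
  shows "l = - 1/2"
proof -
  have "B = - A * l" using AB(1) by simp
  hence "A * (1 - l\<^sup>2) = 0" using AB(2) by (simp add: power2_eq_square algebra_simps)
  with \<open>l\<^sup>2 \<noteq> 1\<close> AB(1) have "A = 0" "B = 0" by simp_all
  moreover have "A = 2 * l * (4 * l\<^sup>2 - 1) * (4 * l\<^sup>2 - 3)"
    unfolding A_def by (simp add: algebra_simps power2_eq_square power3_eq_cube eval_nat_numeral)
  moreover have "B = - 2 * (4 * l\<^sup>2 - 1) * (2 * l\<^sup>2 - 1)"
    unfolding B_def by (simp add: algebra_simps power2_eq_square eval_nat_numeral)
  ultimately have "4 * l\<^sup>2 - 1 = 0" by auto
  hence "(2 * l - 1) * (2 * l + 1) = 0" by (simp add: algebra_simps power2_eq_square)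
  thus "l = - 1/2" using \<open>l < 1/2\<close> by auto
qed

lemma small_circle_closed_walk_6:
  fixes x :: "nat \<Rightarrow> 'a::euclidean_space"
  assumes "DIM('a) \<le> 4" and E: "E1 \<noteq> 0" "E2 \<noteq> 0" "inner E1 E2 = 0"
    and perp: "\<And>j. inner (x j) E1 = 0" "\<And>j. inner (x j) E2 = 0"
    and norm: "\<And>j. inner (x j) (x j) = R" and "R < 1"
    and step: "\<And>j. dist (x j) (x (j + 1)) = 1"
    and no_backtrack: "\<And>j. x (j + 2) \<noteq> x j"
    and closed: "x 6 = x 0"
  shows "x 3 = x 0"
proof -
  note walk = circle_walk_recurrence[OF assms(1) E perp norm step no_backtrack]
  define l where "l = (R - 1/2) / R"
  have R: "R > 0" by (rule walk(1))
  have "l < 1/2" using R \<open>R < 1\<close> by (simp add: l_def field_simps)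
  have x01: "inner (x 0) (x 1) = l * R"
    using inner_of_unit_chord[OF norm norm step[of 0]] R by (simp add: l_def)
  have "\<And>j. x (Suc (Suc j)) = (2 * l) *\<^sub>R x (Suc j) - x j"
    using walk(2) by (simp add: l_def eval_nat_numeral)
  note closed_form = linear_recurrence_closed_form[of x l, OF this]
  have x2: "x 2 = (2 * l) *\<^sub>R x 1 - x 0"
    using closed_form[of 2] by (simp add: eval_nat_numeral)
  have x3: "x 3 = (4 * l\<^sup>2 - 1) *\<^sub>R x 1 + (- 2 * l) *\<^sub>R x 0"
    using closed_form[of 3] by (simp add: eval_nat_numeral algebra_simps power2_eq_square)
  define A where "A = 32 * l ^ 5 - 32 * l ^ 3 + 6 * l"
  define B where "B = - 16 * l ^ 4 + 12 * l\<^sup>2 - 2"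
  have "x 6 = A *\<^sub>R x 1 + (B + 1) *\<^sub>R x 0"
    using closed_form[of 6] unfolding A_def B_def
    by (simp add: eval_nat_numeral algebra_simps power2_eq_square)
  with closed have "A *\<^sub>R x 1 + B *\<^sub>R x 0 = 0" by (simp add: algebra_simps)
  hence "inner (A *\<^sub>R x 1 + B *\<^sub>R x 0) (x 0) = 0" "inner (A *\<^sub>R x 1 + B *\<^sub>R x 0) (x 1) = 0"
    by simp_all
  hence "R * (A * l + B) = 0" "R * (A + B * l) = 0"
    using x01 norm[of 0] norm[of 1] by (simp_all add: inner_add_left inner_commute algebra_simps)
  hence AB: "A * l + B = 0" "A + B * l = 0" using R by simp_all
  have "l\<^sup>2 \<noteq> 1"
  proof
    assume "l\<^sup>2 = 1"
    have "inner (x 2 - x 0) (x 2 - x 0) = 4 * l\<^sup>2 * R - 8 * l * (l * R) + 4 * R"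
      unfolding x2 using x01 norm[of 0] norm[of 1]
      by (simp add: inner_diff_left inner_diff_right inner_commute algebra_simps power2_eq_square)
    also have "\<dots> = 0" using \<open>l\<^sup>2 = 1\<close> by (simp add: algebra_simps power2_eq_square)
    finally show False using no_backtrack[of 0] by (simp add: eval_nat_numeral)
  qed
  have "l = - 1/2"
    using hexagon_recurrence_parameter AB \<open>l\<^sup>2 \<noteq> 1\<close> \<open>l < 1/2\<close> unfolding A_def B_def by blast
  thus ?thesis using x3 by (simp add: power2_eq_square)
qed

section \<open>Lower bounds\<close>

lemma verts_wheel: "verts (wheel n k) = Inl ` {0..<n} \<union> Inr ` {0..<k}"
  by (simp add: wheel_def graph_join_def verts_def cycle_graph_def empty_graph_def)

lemma adj_wheel_Inl_Inl:
  "adj (wheel n k) (Inl a) (Inl b) \<longleftrightarrow> a < n \<and> b < n \<and> a \<noteq> b \<and> (b = (a + 1) mod n \<or> a = (b + 1) mod n)"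
  and adj_wheel_Inr_Inr: "\<not> adj (wheel n k) (Inr a') (Inr b')"
  and adj_wheel_Inl_Inr: "adj (wheel n k) (Inl a) (Inr b') \<longleftrightarrow> a < n \<and> b' < k"
  and adj_wheel_Inr_Inl: "adj (wheel n k) (Inr a') (Inl b) \<longleftrightarrow> a' < k \<and> b < n"
  by (simp_all add: wheel_def graph_join_def adj_def verts_def cycle_graph_def empty_graph_def)

lemmas adj_wheel = adj_wheel_Inl_Inl adj_wheel_Inr_Inr adj_wheel_Inl_Inr adj_wheel_Inr_Inl

lemma adj_wheelE:
  assumes "adj (wheel n k) u v"
  obtains (rim) i where "i < n" "u = Inl i" "v = Inl (Suc i mod n)"
    | (rim') i where "i < n" "v = Inl i" "u = Inl (Suc i mod n)"
    | (spoke) i j where "i < n" "j < k" "u = Inl i" "v = Inr j"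
    | (spoke') i j where "i < n" "j < k" "v = Inl i" "u = Inr j"
  using assms by (cases u; cases v) (auto simp: adj_wheel)

lemma mod_add_2_neq:
  assumes "(n::nat) \<ge> 3"
  shows "(j + 2) mod n \<noteq> j mod n"
proof
  assume h: "(j + 2) mod n = j mod n"
  define i where "i = j mod n"
  have "i < n" using assms by (simp add: i_def)
  have "(i + 2) mod n = i" using h mod_add_left_eq[of j n 2] by (simp add: i_def)
  moreover have "(i + 2) mod n = (if i + 2 < n then i + 2 else i + 2 - n)"
    using \<open>i < n\<close> assms by (auto simp: mod_if)
  ultimately show False using assms by (auto split: if_splits)
qed

lemma wheel_embedding_vec4:
  assumes f: "unit_dist_embedding (wheel n k) d f" and "d \<le> 4" and "n \<ge> 3"
  defines "P \<equiv> \<lambda>i. vec4 (f (Inl i))" and "H \<equiv> \<lambda>j. vec4 (f (Inr j))"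
  shows "\<And>i. i < n \<Longrightarrow> dist (P i) (P ((i + 1) mod n)) = 1"
    and "\<And>i j. i < n \<Longrightarrow> j < k \<Longrightarrow> dist (P i) (H j) = 1"
    and "\<And>i i'. i < n \<Longrightarrow> i' < n \<Longrightarrow> P i = P i' \<Longrightarrow> i = i'"
    and "\<And>j j'. j < k \<Longrightarrow> j' < k \<Longrightarrow> H j = H j' \<Longrightarrow> j = j'"
    and "\<And>i. i < n \<Longrightarrow> in_Rn d (f (Inl i))"
    and "\<And>j. j < k \<Longrightarrow> in_Rn d (f (Inr j))"
proof -
  have V: "verts (wheel n k) = Inl ` {0..<n} \<union> Inr ` {0..<k}" by (rule verts_wheel)
  have inR: "\<And>v. v \<in> verts (wheel n k) \<Longrightarrow> in_Rn d (f v)"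
    and inj: "inj_on f (verts (wheel n k))"
    and edge: "\<And>u v. u \<in> verts (wheel n k) \<Longrightarrow> v \<in> verts (wheel n k) \<Longrightarrow>
      adj (wheel n k) u v \<Longrightarrow> edist d (f u) (f v) = 1"
    using f by (simp_all add: unit_dist_embedding_def)
  have dist_f: "\<And>u v. u \<in> verts (wheel n k) \<Longrightarrow> v \<in> verts (wheel n k) \<Longrightarrow>
      dist (vec4 (f u)) (vec4 (f v)) = edist d (f u) (f v)"
    using edist_eq_dist_vec4[OF inR inR \<open>d \<le> 4\<close>] by simp
  have vec4_f_inj: "\<And>u v. u \<in> verts (wheel n k) \<Longrightarrow> v \<in> verts (wheel n k) \<Longrightarrow>
      vec4 (f u) = vec4 (f v) \<Longrightarrow> u = v"
    using vec4_inject inR in_Rn_mono[OF _ \<open>d \<le> 4\<close>] inj by (metis inj_onD)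
  show "\<And>i. i < n \<Longrightarrow> in_Rn d (f (Inl i))" "\<And>j. j < k \<Longrightarrow> in_Rn d (f (Inr j))"
    using inR V by auto
  show "dist (P i) (P ((i + 1) mod n)) = 1" if "i < n" for i
  proof -
    have "adj (wheel n k) (Inl i) (Inl ((i + 1) mod n))"
      using that \<open>n \<ge> 3\<close> by (auto simp: adj_wheel mod_Suc)
    thus ?thesis unfolding P_def using edge dist_f V that by simp
  qed
  show "dist (P i) (H j) = 1" if "i < n" "j < k" for i j
    unfolding P_def H_def using edge dist_f V that by (simp add: adj_wheel)
  show "i = i'" if "i < n" "i' < n" "P i = P i'" for i i'
    using vec4_f_inj[of "Inl i" "Inl i'"] V that by (simp add: P_def)
  show "j = j'" if "j < k" "j' < k" "H j = H j'" for j j'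
    using vec4_f_inj[of "Inr j" "Inr j'"] V that by (simp add: H_def)
qed

lemma no_wheel_embedding_R1:
  assumes "n \<ge> 3" "k \<ge> 1"
  shows "\<not> unit_dist_embedding (wheel n k) 1 f"
proof
  assume f: "unit_dist_embedding (wheel n k) 1 f"
  note W = wheel_embedding_vec4[OF f _ \<open>n \<ge> 3\<close>]
  have in_R1: "in_Rn 1 (f (Inl 0))" "in_Rn 1 (f (Inl 1))" "in_Rn 1 (f (Inr 0))"
    using W(5)[of 0] W(5)[of 1] W(6)[of 0] assms by auto
  have "\<And>x y. in_Rn 1 x \<Longrightarrow> in_Rn 1 y \<Longrightarrow> dist (vec4 x) (vec4 y) = \<bar>x 0 - y 0\<bar>"
    using edist_eq_dist_vec4 by (fastforce simp: edist_def)
  hence "\<bar>f (Inl 0) 0 - f (Inl 1) 0\<bar> = 1" "\<bar>f (Inl 0) 0 - f (Inr 0) 0\<bar> = 1"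
    "\<bar>f (Inl 1) 0 - f (Inr 0) 0\<bar> = 1"
    using in_R1 W(1)[of 0] W(2)[of 0 0] W(2)[of 1 0] assms by simp_all
  thus False by arith
qed

lemma no_wheel_embedding_R2:
  assumes "n \<ge> 3" "n \<noteq> 6" "k \<ge> 1"
  shows "\<not> unit_dist_embedding (wheel n k) 2 f"
proof
  assume f: "unit_dist_embedding (wheel n k) 2 f"
  note W = wheel_embedding_vec4[OF f _ \<open>n \<ge> 3\<close>, simplified]
  define x where "x = (\<lambda>j. vec4 (f (Inl (j mod n))) - vec4 (f (Inr 0)))"
  have "n > 0" using assms by simp
  have "n = 6"
  proof (rule unit_circle_closed_walk_length[of e2 e3 x])
    show "DIM(R4) \<le> 4" "e2 \<noteq> 0" "e3 \<noteq> 0" "inner e2 e3 = 0"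
      by (simp_all add: e2_nonzero e3_nonzero inner_e2_e3)
    fix j
    have "in_Rn 2 (f (Inl (j mod n)))" "in_Rn 2 (f (Inr 0))"
      using W(5,6) \<open>n > 0\<close> assms(3) by auto
    thus "inner (x j) e2 = 0" "inner (x j) e3 = 0"
      unfolding x_def using inner_vec4_e2 inner_vec4_e3 in_Rn_mono[of 2 _ 3]
      by (simp_all add: inner_diff_left)
    show "inner (x j) (x j) = 1"
      unfolding x_def using W(2)[of "j mod n" 0] \<open>n > 0\<close> assms(3)
      by (simp add: dist_eq_1_iff_inner)
    show "dist (x j) (x (j + 1)) = 1"
      unfolding x_def dist_diff_cancel using W(1)[of "j mod n"] \<open>n > 0\<close> by (simp add: mod_Suc_eq)
    show "x (j + 2) \<noteq> x j"
      unfolding x_def using W(3)[of "(j + 2) mod n" "j mod n"] mod_add_2_neq[OF \<open>n \<ge> 3\<close>] \<open>n > 0\<close>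
      by auto
    show "x (j + n) = x j" by (simp add: x_def)
  next
    fix i i' assume "i < n" "i' < n" "x i = x i'"
    thus "i = i'" using W(3)[of i i'] by (simp add: x_def)
  qed (use assms in auto)
  with assms show False by simp
qed

lemma sphere_slice_center:
  fixes e f g :: "'a::real_inner"
  assumes ef: "inner e f = 0" and "f \<noteq> 0"
    and g: "inner g g = 1" "inner g e = inner e e / 2" "inner g f = a"
  defines "c \<equiv> (1/2) *\<^sub>R e + (a / inner f f) *\<^sub>R f"
  shows "inner (g - c) e = 0" "inner (g - c) f = 0"
    and "inner (g - c) (g - c) = 1 - inner e e / 4 - a\<^sup>2 / inner f f"
proof -
  have "inner f f \<noteq> 0" using \<open>f \<noteq> 0\<close> by simp
  moreover have "inner f e = 0" using ef by (simp add: inner_commute)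
  ultimately show "inner (g - c) e = 0" "inner (g - c) f = 0"
    and "inner (g - c) (g - c) = 1 - inner e e / 4 - a\<^sup>2 / inner f f"
    using ef g unfolding c_def
    by (simp_all add: inner_diff_left inner_diff_right inner_add_left inner_add_right
        inner_commute power2_eq_square)
qed

text \<open>A hexagon with unit sides on the intersection of a unit sphere around \<open>h\<close> with an
  affine plane of codimension 2 missing \<open>h\<close>: this is a circle of radius less than 1, on which
  the hexagon would have to be a triangle traversed twice.\<close>
lemma no_unit_hexagon_in_sphere_slice:
  fixes P :: "nat \<Rightarrow> 'a::euclidean_space"
  assumes "DIM('a) \<le> 4"
    and side: "\<And>i. i < 6 \<Longrightarrow> dist (P i) (P ((i + 1) mod 6)) = 1"
    and inj: "\<And>i i'. i < 6 \<Longrightarrow> i' < 6 \<Longrightarrow> P i = P i' \<Longrightarrow> i = i'"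
    and E: "e \<noteq> 0" "f \<noteq> 0" "inner e f = 0"
    and sphere: "\<And>i. i < 6 \<Longrightarrow> inner (P i - h) (P i - h) = 1"
    and slice: "\<And>i. i < 6 \<Longrightarrow> inner (P i - h) e = inner e e / 2"
      "\<And>i. i < 6 \<Longrightarrow> inner (P i - h) f = a"
  shows False
proof -
  define c where "c = (1/2) *\<^sub>R e + (a / inner f f) *\<^sub>R f"
  define x where "x = (\<lambda>j. P (j mod 6) - h - c)"
  define R where "R = 1 - inner e e / 4 - a\<^sup>2 / inner f f"
  have m: "\<And>j::nat. j mod 6 < 6" by simp
  note C = sphere_slice_center[OF E(3,2) sphere[OF m] slice(1)[OF m] slice(2)[OF m], folded c_def]
  have "x 3 = x 0"
  proof (rule small_circle_closed_walk_6[OF assms(1) E, of x R])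
    fix j
    show "inner (x j) e = 0" "inner (x j) f = 0" "inner (x j) (x j) = R"
      using C[of j] by (simp_all add: x_def R_def)
    show "dist (x j) (x (j + 1)) = 1"
      unfolding x_def dist_diff_cancel using side[of "j mod 6"] by (simp add: mod_Suc_eq)
    show "x (j + 2) \<noteq> x j"
      unfolding x_def using inj[of "(j + 2) mod 6" "j mod 6"] mod_add_2_neq[of 6 j] by auto
  next
    have "inner e e > 0" using E(1) by simp
    moreover have "a\<^sup>2 / inner f f \<ge> 0" by simp
    ultimately show "R < 1" unfolding R_def by linarith
  qed (simp add: x_def)
  thus False using inj[of 3 0] by (simp add: x_def)
qed

lemma no_wheel_6_2_embedding_R3: "\<not> unit_dist_embedding (wheel 6 2) 3 f"
proof
  assume f: "unit_dist_embedding (wheel 6 2) 3 f"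
  note W = wheel_embedding_vec4[OF f, simplified]
  define P where "P = (\<lambda>i. vec4 (f (Inl i)))"
  define H where "H = (\<lambda>j. vec4 (f (Inr j)))"
  show False
  proof (rule no_unit_hexagon_in_sphere_slice[of P "H 1 - H 0" e3 "H 0" 0])
    show "DIM(R4) \<le> 4" "e3 \<noteq> 0" by (simp_all add: e3_nonzero)
    show "H 1 - H 0 \<noteq> 0" using W(4)[of 1 0] by (auto simp: H_def)
    show "inner (H 1 - H 0) e3 = 0"
      using inner_vec4_e3[OF W(6)[of 1]] inner_vec4_e3[OF W(6)[of 0]]
      by (simp add: H_def inner_diff_left)
    fix i :: nat assume i: "i < 6"
    have d: "dist (P i) (H 0) = 1" "dist (P i) (H 1) = 1" using W(2) i by (auto simp: P_def H_def)
    show "inner (P i - H 0) (P i - H 0) = 1" using d(1) by (simp add: dist_eq_1_iff_inner)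
    show "inner (P i - H 0) (H 1 - H 0) = inner (H 1 - H 0) (H 1 - H 0) / 2"
      by (rule inner_of_common_unit_neighbour[OF d])
    show "inner (P i - H 0) e3 = 0"
      using inner_vec4_e3[OF W(5)[OF i]] inner_vec4_e3[OF W(6)[of 0]]
      by (simp add: H_def P_def inner_diff_left)
  qed (use W(1,3) in \<open>simp_all add: P_def\<close>)
qed

lemma no_wheel_6_embedding_R4:
  assumes "k \<ge> 3"
  shows "\<not> unit_dist_embedding (wheel 6 k) 4 f"
proof
  assume f: "unit_dist_embedding (wheel 6 k) 4 f"
  note W = wheel_embedding_vec4[OF f, simplified]
  define P where "P = (\<lambda>i. vec4 (f (Inl i)))"
  define H where "H = (\<lambda>j. vec4 (f (Inr j)))"
  define e where "e = H 1 - H 0"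
  define t where "t = inner (H 2 - H 0) e / inner e e"
  define e' where "e' = (H 2 - H 0) - t *\<^sub>R e"
  define a where "a = inner (H 2 - H 0) (H 2 - H 0) / 2 - t * (inner e e / 2)"
  have H: "H 1 \<noteq> H 0" "H 2 \<noteq> H 0" "H 2 \<noteq> H 1"
    using W(4)[of 1 0] W(4)[of 2 0] W(4)[of 2 1] assms by (auto simp: H_def)
  have spoke: "\<And>i j. i < 6 \<Longrightarrow> j < k \<Longrightarrow> dist (P i) (H j) = 1"
    using W(2) by (simp add: P_def H_def)
  show False
  proof (rule no_unit_hexagon_in_sphere_slice[of P e e' "H 0" a])
    show "e \<noteq> 0" using H by (simp add: e_def)
    thus "inner e e' = 0" by (simp add: e'_def t_def inner_diff_right inner_commute)
    show "e' \<noteq> 0" unfolding e'_def t_def e_def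
      by (rule unit_sphere_not_collinear[of "P 0"]) (use spoke assms H in auto)
    fix i :: nat assume i: "i < 6"
    have d: "dist (P i) (H 0) = 1" "dist (P i) (H 1) = 1" "dist (P i) (H 2) = 1"
      using spoke i assms by auto
    show "inner (P i - H 0) (P i - H 0) = 1" using d(1) by (simp add: dist_eq_1_iff_inner)
    show ie: "inner (P i - H 0) e = inner e e / 2"
      unfolding e_def by (rule inner_of_common_unit_neighbour[OF d(1,2)])
    have "inner (P i - H 0) e' = inner (P i - H 0) (H 2 - H 0) - t * inner (P i - H 0) e"
      unfolding e'_def by (rule trans[OF inner_diff_right]) (simp only: inner_scaleR_right)
    also have "\<dots> = a"
      unfolding a_def ie inner_of_common_unit_neighbour[OF d(1,3)] ..
    finally show "inner (P i - H 0) e' = a" .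
  qed (use W(1,3) in \<open>simp_all add: P_def\<close>)
qed

text \<open>With three hubs the rim differences are orthogonal to the hub differences; each family
  spans a plane, and both are orthogonal to \<open>e3\<close>: five orthogonal directions in \<open>R4\<close>.\<close>
lemma no_wheel_embedding_R3:
  assumes "n \<ge> 3" "k \<ge> 3"
  shows "\<not> unit_dist_embedding (wheel n k) 3 f"
proof
  assume f: "unit_dist_embedding (wheel n k) 3 f"
  note W = wheel_embedding_vec4[OF f _ \<open>n \<ge> 3\<close>, simplified]
  define P where "P = (\<lambda>i. vec4 (f (Inl i)))"
  define H where "H = (\<lambda>j. vec4 (f (Inr j)))"
  define u where "u = P 1 - P 0"
  define u2 where "u2 = P 2 - P 0"
  define u' where "u' = u2 - (inner u2 u / inner u u) *\<^sub>R u"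
  define v where "v = H 1 - H 0"
  define v2 where "v2 = H 2 - H 0"
  define v' where "v' = v2 - (inner v2 v / inner v v) *\<^sub>R v"
  have H: "H 1 \<noteq> H 0" "H 2 \<noteq> H 0" "H 2 \<noteq> H 1"
    using W(4)[of 1 0] W(4)[of 2 0] W(4)[of 2 1] assms by (auto simp: H_def)
  have P: "P 1 \<noteq> P 0" "P 2 \<noteq> P 0" "P 2 \<noteq> P 1"
    using W(3)[of 1 0] W(3)[of 2 0] W(3)[of 2 1] assms by (auto simp: P_def)
  have spoke: "\<And>i j. i < n \<Longrightarrow> j < k \<Longrightarrow> dist (P i) (H j) = 1"
    using W(2) by (simp add: P_def H_def)
  have "u \<noteq> 0" "v \<noteq> 0" using P H by (simp_all add: u_def v_def)
  moreover have "u' \<noteq> 0" unfolding u'_def u2_def u_def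
    by (rule unit_sphere_not_collinear[of "H 0"])
      (use spoke[of _ 0, unfolded dist_commute[of "P _"]] assms P in auto)
  moreover have "v' \<noteq> 0" unfolding v'_def v2_def v_def
    by (rule unit_sphere_not_collinear[of "P 0"]) (use spoke assms H in auto)
  moreover have "inner u u' = 0" "inner v v' = 0"
    unfolding u'_def v'_def using P H by (simp_all add: u_def v_def inner_diff_projection)
  moreover have "inner u v = 0" "inner u v2 = 0" "inner u2 v = 0" "inner u2 v2 = 0"
    unfolding u_def u2_def v_def v2_def using assms
    by (auto intro!: common_unit_neighbours_orthogonal spoke)
  hence "inner u v = 0" "inner u v' = 0" "inner u' v = 0" "inner u' v' = 0"
    by (simp_all add: u'_def v'_def inner_diff_left inner_diff_right)
  moreover have "inner u e3 = 0" "inner u' e3 = 0" "inner v e3 = 0" "inner v' e3 = 0"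
    using inner_vec4_e3[OF W(5)] inner_vec4_e3[OF W(6)] assms
    by (simp_all add: u_def u2_def u'_def v_def v2_def v'_def P_def H_def inner_diff_left)
  ultimately show False
    using five_pairwise_orthogonal_impossible[of u u' v v' e3] e3_nonzero by simp
qed

section \<open>Constructions\<close>

lemma wheel_embeddingI:
  assumes "n \<ge> 3"
    and rim_in: "\<And>i. i < n \<Longrightarrow> in_Rn D (c i)" and hub_in: "\<And>j. j < k \<Longrightarrow> in_Rn D (q j)"
    and rim_inj: "\<And>i i'. i < n \<Longrightarrow> i' < n \<Longrightarrow> c i = c i' \<Longrightarrow> i = i'"
    and hub_inj: "\<And>j j'. j < k \<Longrightarrow> j' < k \<Longrightarrow> q j = q j' \<Longrightarrow> j = j'"
    and rim_hub: "\<And>i j. i < n \<Longrightarrow> j < k \<Longrightarrow> c i \<noteq> q j"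
    and rim_edge: "\<And>i. i < n \<Longrightarrow> edist D (c i) (c (Suc i mod n)) = 1"
    and spoke: "\<And>i j. i < n \<Longrightarrow> j < k \<Longrightarrow> edist D (c i) (q j) = 1"
    and rim_rim: "\<And>i w. i < n \<Longrightarrow> w < n \<Longrightarrow> w \<noteq> i \<Longrightarrow> w \<noteq> Suc i mod n \<Longrightarrow>
      \<not> on_segment (c w) (c i) (c (Suc i mod n))"
    and hub_rim: "\<And>i j. i < n \<Longrightarrow> j < k \<Longrightarrow> \<not> on_segment (q j) (c i) (c (Suc i mod n))"
    and rim_spoke: "\<And>i j w. i < n \<Longrightarrow> j < k \<Longrightarrow> w < n \<Longrightarrow> w \<noteq> i \<Longrightarrow>
      \<not> on_segment (c w) (c i) (q j)"
    and hub_spoke: "\<And>i j l. i < n \<Longrightarrow> j < k \<Longrightarrow> l < k \<Longrightarrow> l \<noteq> j \<Longrightarrow>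
      \<not> on_segment (q l) (c i) (q j)"
  shows "unit_dist_embedding (wheel n k) D (case_sum c q)"
proof -
  let ?V = "Inl ` {0..<n} \<union> Inr ` {0..<k}"
  let ?f = "case_sum c q"
  have on_rim_edge: "\<not> on_segment (?f w) (c i) (c (Suc i mod n))"
    if "i < n" "w \<in> ?V" "w \<noteq> Inl i" "w \<noteq> Inl (Suc i mod n)" for i w
    using that by (cases w) (use rim_rim[of i] hub_rim[of i] in auto)
  have on_spoke: "\<not> on_segment (?f w) (c i) (q j)"
    if "i < n" "j < k" "w \<in> ?V" "w \<noteq> Inl i" "w \<noteq> Inr j" for i j w
    using that by (cases w) (use rim_spoke[of i j] hub_spoke[of i j] in auto)
  show ?thesis
    unfolding unit_dist_embedding_def verts_wheel
  proof (intro conjI ballI impI)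
    show "in_Rn D (?f v)" if "v \<in> ?V" for v
      using that rim_in hub_in by auto
    show "inj_on ?f ?V"
    proof (rule inj_onI)
      fix x y assume "x \<in> ?V" "y \<in> ?V" "?f x = ?f y"
      thus "x = y"
        using rim_inj hub_inj rim_hub by (cases x; cases y) (auto, metis)
    qed
    fix u v assume "u \<in> ?V" "v \<in> ?V"
    show "edist D (?f u) (?f v) = 1" if "adj (wheel n k) u v"
      using that by (cases rule: adj_wheelE) (auto simp: rim_edge spoke edist_commute)
    fix w assume "w \<in> ?V" "adj (wheel n k) u v \<and> w \<noteq> u \<and> w \<noteq> v"
    then show "\<not> on_segment (?f w) (?f u) (?f v)"
    proof (elim conjE adj_wheelE)
      fix i assume "i < n" "v = Inl i" "u = Inl (Suc i mod n)" "w \<noteq> u" "w \<noteq> v"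
      thus ?thesis using on_rim_edge[of i w] on_segment_commute \<open>w \<in> ?V\<close> by auto
    next
      fix i j assume "i < n" "j < k" "v = Inl i" "u = Inr j" "w \<noteq> u" "w \<noteq> v"
      thus ?thesis using on_spoke[of i j w] on_segment_commute \<open>w \<in> ?V\<close> by auto
    qed (use on_rim_edge on_spoke \<open>w \<in> ?V\<close> in auto)
  qed
qed

lemma sum_power2_diff_pos:
  assumes "in_Rn D u" "in_Rn D v" "u \<noteq> v"
  shows "(\<Sum>l<D. (u l - v l)\<^sup>2) > 0"
proof -
  obtain l where l: "u l \<noteq> v l" using assms(3) by auto
  hence "l < D" using assms(1,2) by (auto simp: in_Rn_def) (metis not_le)
  hence "(u l - v l)\<^sup>2 \<le> (\<Sum>l<D. (u l - v l)\<^sup>2)"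
    by (intro member_le_sum) auto
  moreover have "(u l - v l)\<^sup>2 > 0" using l by simp
  ultimately show ?thesis by linarith
qed

lemma sum_power2_convex_combination:
  fixes u v :: "nat \<Rightarrow> real"
  shows "(\<Sum>l<D. ((1 - t) * u l + t * v l)\<^sup>2) =
    (1 - t)\<^sup>2 * (\<Sum>l<D. (u l)\<^sup>2) + t\<^sup>2 * (\<Sum>l<D. (v l)\<^sup>2) + 2 * t * (1 - t) * (\<Sum>l<D. u l * v l)"
proof -
  have "(\<Sum>l<D. ((1 - t) * u l + t * v l)\<^sup>2) =
      (\<Sum>l<D. (1 - t)\<^sup>2 * (u l)\<^sup>2 + t\<^sup>2 * (v l)\<^sup>2 + (2 * t * (1 - t)) * (u l * v l))"
    by (rule sum.cong) (auto simp: power2_eq_square algebra_simps)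
  thus ?thesis by (simp add: sum.distrib sum_distrib_left)
qed

lemma sum_power2_diff:
  fixes u v :: "nat \<Rightarrow> real"
  shows "(\<Sum>l<D. (u l - v l)\<^sup>2) = (\<Sum>l<D. (u l)\<^sup>2) + (\<Sum>l<D. (v l)\<^sup>2) - 2 * (\<Sum>l<D. u l * v l)"
  by (simp add: power2_eq_square algebra_simps sum.distrib sum_subtractf sum_distrib_left)

lemma not_on_segment_sphere:
  assumes "in_Rn D u" "in_Rn D v"
    and norms: "(\<Sum>l<D. (u l)\<^sup>2) = R" "(\<Sum>l<D. (v l)\<^sup>2) = R" "(\<Sum>l<D. (w l)\<^sup>2) = R"
    and "u \<noteq> v" "w \<noteq> u" "w \<noteq> v"
  shows "\<not> on_segment w u v"
proof
  assume "on_segment w u v"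
  then obtain t where t: "0 \<le> t" "t \<le> 1" and w: "w = (\<lambda>l. (1 - t) * u l + t * v l)"
    unfolding on_segment_def by blast
  define S where "S = (\<Sum>l<D. u l * v l)"
  have "R = (1 - t)\<^sup>2 * R + t\<^sup>2 * R + 2 * t * (1 - t) * S"
    using norms by (simp add: w S_def sum_power2_convex_combination)
  hence "2 * t * (1 - t) * (R - S) = 0" by (simp add: power2_eq_square algebra_simps)
  moreover have "R - S > 0"
    using sum_power2_diff_pos[OF assms(1,2,6)] norms by (simp add: sum_power2_diff S_def)
  ultimately have "t = 0 \<or> t = 1" by simp
  thus False using w assms(7,8) by auto
qed

lemma on_segment_coordinate_eq:
  assumes "on_segment w u v" "u l = v l"
  shows "w l = u l"
  using assms by (auto simp: on_segment_def algebra_simps)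

lemma on_segment_eq_left:
  assumes "on_segment w u v" "w l = u l" "v l \<noteq> u l"
  shows "w = u"
proof -
  obtain t where w: "w = (\<lambda>l. (1 - t) * u l + t * v l)"
    using assms(1) unfolding on_segment_def by blast
  hence "t * (v l - u l) = 0" using assms(2) by (simp add: algebra_simps)
  hence "t = 0" using assms(3) by simp
  thus ?thesis using w by simp
qed

text \<open>Rim on a sphere of squared radius \<open>R\<close> in the first \<open>a\<close> coordinates, hubs on a sphere
  of squared radius \<open>1 - R\<close> in the remaining ones: every spoke has length 1 by Pythagoras,
  and no vertex lies on an edge because both spheres are strictly convex and the two
  coordinate blocks are complementary.\<close>
lemma wheel_embedding_orthogonal_spheres:
  assumes "n \<ge> 3" "a \<le> D" "0 < R" "R < 1"
    and rim_in: "\<And>i. i < n \<Longrightarrow> in_Rn a (c i)"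
    and hub_in: "\<And>j. j < k \<Longrightarrow> in_Rn D (q j)"
    and hub_low: "\<And>j l. j < k \<Longrightarrow> l < a \<Longrightarrow> q j l = 0"
    and rim_norm: "\<And>i. i < n \<Longrightarrow> (\<Sum>l<a. (c i l)\<^sup>2) = R"
    and hub_norm: "\<And>j. j < k \<Longrightarrow> (\<Sum>l<D. (q j l)\<^sup>2) = 1 - R"
    and rim_inj: "\<And>i i'. i < n \<Longrightarrow> i' < n \<Longrightarrow> c i = c i' \<Longrightarrow> i = i'"
    and hub_inj: "\<And>j j'. j < k \<Longrightarrow> j' < k \<Longrightarrow> q j = q j' \<Longrightarrow> j = j'"
    and rim_edge: "\<And>i. i < n \<Longrightarrow> edist a (c i) (c (Suc i mod n)) = 1"
  shows "unit_dist_embedding (wheel n k) D (case_sum c q)"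
proof -
  have rim_inD: "\<And>i. i < n \<Longrightarrow> in_Rn D (c i)" using rim_in in_Rn_mono[OF _ \<open>a \<le> D\<close>] by blast
  have rim_normD: "\<And>i. i < n \<Longrightarrow> (\<Sum>l<D. (c i l)\<^sup>2) = R"
    using rim_norm rim_in sum_power2_in_Rn[OF _ \<open>a \<le> D\<close>] by simp
  have rim_edgeD: "\<And>i. i < n \<Longrightarrow> edist D (c i) (c (Suc i mod n)) = 1"
    using rim_edge rim_in edist_in_Rn[OF _ _ \<open>a \<le> D\<close>] \<open>n \<ge> 3\<close> by simp
  have rim_high: "\<And>i l. i < n \<Longrightarrow> a \<le> l \<Longrightarrow> c i l = 0" using rim_in by (simp add: in_Rn_def)
  have nonzero: "\<exists>l. x l \<noteq> 0" if "(\<Sum>l<D. (x l)\<^sup>2) \<noteq> 0" for x :: "nat \<Rightarrow> real"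
  proof (rule ccontr)
    assume "\<nexists>l. x l \<noteq> 0"
    with that show False by simp
  qed
  have rim_low: "\<exists>l<a. c i l \<noteq> 0" if i: "i < n" for i
  proof -
    obtain l where "c i l \<noteq> 0" using nonzero[of "c i"] rim_normD[OF i] \<open>0 < R\<close> by auto
    with rim_high[OF i] show ?thesis by (auto simp: not_le[symmetric])
  qed
  have hub_high: "\<exists>l\<ge>a. q j l \<noteq> 0" if j: "j < k" for j
  proof -
    obtain l where "q j l \<noteq> 0" using nonzero[of "q j"] hub_norm[OF j] \<open>R < 1\<close> by auto
    with hub_low[OF j] show ?thesis by (auto simp: not_le[symmetric])
  qed
  show ?thesis
  proof (rule wheel_embeddingI[OF \<open>n \<ge> 3\<close> rim_inD hub_in rim_inj hub_inj])
    fix i j assume i: "i < n" and j: "j < k"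
    obtain l where l: "a \<le> l" "q j l \<noteq> 0" using hub_high[OF j] by blast
    then show "c i \<noteq> q j" using rim_high[OF i] by auto
    have "c i l * q j l = 0" for l using rim_high[OF i] hub_low[OF j] by (cases "l < a") auto
    hence "(\<Sum>l<D. (c i l - q j l)\<^sup>2) = (\<Sum>l<D. (c i l)\<^sup>2) + (\<Sum>l<D. (q j l)\<^sup>2)"
      by (simp add: sum_power2_diff sum.neutral)
    thus "edist D (c i) (q j) = 1" using rim_normD[OF i] hub_norm[OF j] by (simp add: edist_def)
    have "Suc i mod n < n" using \<open>n \<ge> 3\<close> by simp
    with l show "\<not> on_segment (q j) (c i) (c (Suc i mod n))"
      using on_segment_coordinate_eq rim_high[OF i l(1)] rim_high[of "Suc i mod n" l] by fastforce
    show "\<not> on_segment (c w) (c i) (q j)" if "w < n" "w \<noteq> i" for w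
      using on_segment_eq_left[of "c w" "c i" "q j" l] rim_high[OF i l(1)] rim_high[OF that(1) l(1)]
        l(2) rim_inj[OF that(1) i] that(2) by auto
    show "\<not> on_segment (q j') (c i) (q j)" if "j' < k" "j' \<noteq> j" for j'
    proof -
      obtain l' where l': "l' < a" "c i l' \<noteq> 0" using rim_low[OF i] by blast
      thus ?thesis
        using on_segment_eq_left[of "q j'" "q j" "c i" l'] on_segment_commute
          hub_low[OF j l'(1)] hub_low[OF that(1) l'(1)] hub_inj[OF that(1) j] that(2) by auto
    qed
  next
    fix i w assume i: "i < n" and w: "w < n" "w \<noteq> i" "w \<noteq> Suc i mod n"
    have i': "Suc i mod n < n" "i \<noteq> Suc i mod n" using i \<open>n \<ge> 3\<close> by (auto simp: mod_Suc)
    show "\<not> on_segment (c w) (c i) (c (Suc i mod n))"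
      by (rule not_on_segment_sphere[OF rim_inD rim_inD rim_normD rim_normD rim_normD])
        (use i i' w rim_inj in blast)+
  qed (use rim_edgeD in auto)
qed

definition hub_pair :: "real \<Rightarrow> nat \<Rightarrow> nat \<Rightarrow> nat \<Rightarrow> real" where
  "hub_pair \<rho> a j = (\<lambda>l. if l = a then (if j = 0 then \<rho> else - \<rho>) else 0)"

lemma in_Rn_hub_pair: "in_Rn (Suc a) (hub_pair \<rho> a j)"
  by (simp add: hub_pair_def in_Rn_def)

lemma hub_pair_low: "l < a \<Longrightarrow> hub_pair \<rho> a j l = 0"
  by (simp add: hub_pair_def)

lemma sum_power2_hub_pair: "a < D \<Longrightarrow> (\<Sum>l<D. (hub_pair \<rho> a j l)\<^sup>2) = \<rho>\<^sup>2"
  by (simp add: hub_pair_def if_distrib[of "\<lambda>x. x\<^sup>2"] cong: if_cong)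

lemma hub_pair_inject:
  assumes "\<rho> \<noteq> 0" "j < 2" "j' < 2" "hub_pair \<rho> a j = hub_pair \<rho> a j'"
  shows "j = j'"
  using fun_cong[OF assms(4), of a] assms(1-3) by (auto simp: hub_pair_def split: if_splits)

text \<open>Points \<open>\<rho> ((1 - j\<^sup>2)/(1 + j\<^sup>2), 2j/(1 + j\<^sup>2))\<close> of the rational parametrisation of a circle.\<close>
definition hub_circle :: "real \<Rightarrow> nat \<Rightarrow> nat \<Rightarrow> nat \<Rightarrow> real" where
  "hub_circle \<rho> a j = (\<lambda>l. if l = a then \<rho> * (1 - (real j)\<^sup>2) / (1 + (real j)\<^sup>2)
     else if l = Suc a then \<rho> * (2 * real j) / (1 + (real j)\<^sup>2) else 0)"

lemma in_Rn_hub_circle: "in_Rn (Suc (Suc a)) (hub_circle \<rho> a j)"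
  by (simp add: hub_circle_def in_Rn_def)

lemma hub_circle_low: "l < a \<Longrightarrow> hub_circle \<rho> a j l = 0"
  by (simp add: hub_circle_def)

lemma sum_power2_hub_circle:
  assumes "Suc a < D"
  shows "(\<Sum>l<D. (hub_circle \<rho> a j l)\<^sup>2) = \<rho>\<^sup>2"
proof -
  define x where "x = real j"
  have "(\<Sum>l<D. (hub_circle \<rho> a j l)\<^sup>2) =
      (\<Sum>l<D. (if l = a then (\<rho> * (1 - x\<^sup>2) / (1 + x\<^sup>2))\<^sup>2 else 0) +
        (if l = Suc a then (\<rho> * (2 * x) / (1 + x\<^sup>2))\<^sup>2 else 0))"
    by (rule sum.cong) (auto simp: hub_circle_def x_def)
  also have "\<dots> = (\<rho> * (1 - x\<^sup>2) / (1 + x\<^sup>2))\<^sup>2 + (\<rho> * (2 * x) / (1 + x\<^sup>2))\<^sup>2"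
    using assms by (simp add: sum.distrib)
  also have "\<dots> = \<rho>\<^sup>2"
  proof -
    have "1 + x\<^sup>2 > 0" by (simp add: add_pos_nonneg)
    moreover have "(1 - x\<^sup>2)\<^sup>2 + (2 * x)\<^sup>2 = (1 + x\<^sup>2)\<^sup>2" by (simp add: power2_eq_square algebra_simps)
    ultimately show ?thesis
      by (simp add: power_divide power_mult_distrib field_simps) (simp add: algebra_simps power2_eq_square)
  qed
  finally show ?thesis .
qed

lemma hub_circle_inject:
  assumes "\<rho> \<noteq> 0" "hub_circle \<rho> a j = hub_circle \<rho> a j'"
  shows "j = j'"
proof -
  define x where "x = (real j)\<^sup>2"
  define y where "y = (real j')\<^sup>2"
  have "1 + x > 0" "1 + y > 0" by (simp_all add: x_def y_def add_pos_nonneg)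
  moreover have "\<rho> * (1 - x) / (1 + x) = \<rho> * (1 - y) / (1 + y)"
    using fun_cong[OF assms(2), of a] by (simp add: hub_circle_def x_def y_def)
  ultimately have "(1 - x) * (1 + y) = (1 - y) * (1 + x)" using assms(1) by (simp add: field_simps)
  hence "x = y" by (simp add: algebra_simps)
  thus "j = j'" unfolding x_def y_def by simp
qed

text \<open>The six vertices of the cube \<open>[-1/2, 1/2]\<^sup>3\<close> off the diagonal through \<open>\<plusminus>(1/2, 1/2, 1/2)\<close>:
  a skew hexagon with unit sides on the sphere of squared radius \<open>3/4\<close>.\<close>
definition skew_hexagon :: "nat \<Rightarrow> nat \<Rightarrow> real" where
  "skew_hexagon i l =
     (if l = 0 then (if i \<in> {0, 1, 5} then 1/2 else - 1/2)
      else if l = 1 then (if i \<in> {1, 2, 3} then 1/2 else - 1/2)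
      else if l = 2 then (if i \<in> {3, 4, 5} then 1/2 else - 1/2)
      else 0)"

lemma skew_hexagon:
  shows "in_Rn 3 (skew_hexagon i)"
    and "(\<Sum>l<3. (skew_hexagon i l)\<^sup>2) = 3/4"
    and "i < 6 \<Longrightarrow> edist 3 (skew_hexagon i) (skew_hexagon (Suc i mod 6)) = 1"
    and "i < 6 \<Longrightarrow> i' < 6 \<Longrightarrow> skew_hexagon i = skew_hexagon i' \<Longrightarrow> i = i'"
proof -
  have sum3: "(\<Sum>l<3. f l) = f 0 + f 1 + (f 2 :: real)" for f :: "nat \<Rightarrow> real" by (simp add: eval_nat_numeral)
  have six: "i < 6 \<Longrightarrow> i = 0 \<or> i = 1 \<or> i = 2 \<or> i = 3 \<or> i = 4 \<or> i = 5" for i :: nat by linarith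
  show "in_Rn 3 (skew_hexagon i)" by (simp add: skew_hexagon_def in_Rn_def)
  show "(\<Sum>l<3. (skew_hexagon i l)\<^sup>2) = 3/4"
    by (simp add: sum3 skew_hexagon_def power2_eq_square)
  show "edist 3 (skew_hexagon i) (skew_hexagon (Suc i mod 6)) = 1" if "i < 6"
    using six[OF that] by (elim disjE) (simp_all add: edist_def sum3 skew_hexagon_def power2_eq_square)
  assume "i < 6" "i' < 6" and eq: "skew_hexagon i = skew_hexagon i'"
  have "skew_hexagon i l = skew_hexagon i' l" for l using eq by simp
  from this[of 0] this[of 1] this[of 2] six[OF \<open>i < 6\<close>] six[OF \<open>i' < 6\<close>] show "i = i'"
    by (elim disjE) (simp_all add: skew_hexagon_def)
qed

definition star_angle :: "nat \<Rightarrow> nat \<Rightarrow> real" where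
  "star_angle n s = 2 * pi * real s / real n"

definition star_radius :: "nat \<Rightarrow> nat \<Rightarrow> real" where
  "star_radius n s = 1 / (2 * sin (pi * real s / real n))"

definition star_polygon :: "nat \<Rightarrow> nat \<Rightarrow> nat \<Rightarrow> nat \<Rightarrow> real" where
  "star_polygon n s i = (\<lambda>l. if l = 0 then star_radius n s * cos (real i * star_angle n s)
     else if l = 1 then star_radius n s * sin (real i * star_angle n s) else 0)"

lemma sin_star_pos:
  assumes "0 < s" "2 * s \<le> n"
  shows "sin (pi * real s / real n) > 0"
proof (rule sin_gt_zero)
  have "real s / real n \<le> 1/2" using assms by (simp add: field_simps)
  hence "pi * (real s / real n) \<le> pi * (1/2)" by (intro mult_left_mono) simp_all
  hence "pi * real s / real n \<le> pi / 2" by simp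
  moreover have "pi / 2 < pi" using pi_gt_zero by simp
  ultimately show "pi * real s / real n < pi" by linarith
qed (use assms in simp)

lemma star_radius_pos: "0 < s \<Longrightarrow> 2 * s \<le> n \<Longrightarrow> star_radius n s > 0"
  using sin_star_pos by (simp add: star_radius_def)

lemma star_radius_less_1:
  assumes "0 < s" "2 * s \<le> n" "n < 6 * s"
  shows "star_radius n s < 1"
proof -
  have le: "real s / real n \<le> 1/2" and gt: "1/6 < real s / real n"
    using assms by (simp_all add: field_simps)
  have "sin (pi / 6) < sin (pi * real s / real n)"
  proof (rule sin_monotone_2pi)
    have "pi * (1/6) < pi * (real s / real n)" using gt by (intro mult_strict_left_mono) simp_all
    thus "pi / 6 < pi * real s / real n" by simp
    have "pi * (real s / real n) \<le> pi * (1/2)" using le by (intro mult_left_mono) simp_all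
    thus "pi * real s / real n \<le> pi / 2" by simp
  qed (use pi_gt_zero in simp)
  thus ?thesis by (simp add: star_radius_def sin_30)
qed

lemma in_Rn_star_polygon: "in_Rn 2 (star_polygon n s i)"
  by (simp add: star_polygon_def in_Rn_def)

lemma sum_power2_star_polygon: "(\<Sum>l<2. (star_polygon n s i l)\<^sup>2) = (star_radius n s)\<^sup>2"
proof -
  have "(\<Sum>l<2. (star_polygon n s i l)\<^sup>2) =
      (star_radius n s)\<^sup>2 * ((sin (real i * star_angle n s))\<^sup>2 + (cos (real i * star_angle n s))\<^sup>2)"
    by (simp add: eval_nat_numeral star_polygon_def power_mult_distrib distrib_left)
  thus ?thesis by (simp only: sin_cos_squared_add mult_1_right)
qed

lemma star_polygon_mod: "n > 0 \<Longrightarrow> star_polygon n s (m mod n) = star_polygon n s m"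
proof -
  assume "n > 0"
  have "real m = real (m mod n) + real n * real (m div n)"
    by (metis mod_mult_div_eq of_nat_add of_nat_mult add.commute mult.commute)
  hence "real m * star_angle n s = real (m mod n) * star_angle n s + 2 * pi * of_int (int (m div n * s))"
    using \<open>n > 0\<close> by (simp add: star_angle_def field_simps)
  hence "sin (real m * star_angle n s) = sin (real (m mod n) * star_angle n s)"
    "cos (real m * star_angle n s) = cos (real (m mod n) * star_angle n s)"
    using sin_cos_eq_iff by blast+
  thus ?thesis unfolding star_polygon_def by (intro ext) (simp only:)
qed

lemma chord_cos_sin: "(cos (a::real) - cos (a + t))\<^sup>2 + (sin a - sin (a + t))\<^sup>2 = 2 - 2 * cos t"
proof -
  have "(cos a - cos (a + t))\<^sup>2 + (sin a - sin (a + t))\<^sup>2 =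
      ((sin a)\<^sup>2 + (cos a)\<^sup>2) + ((sin (a + t))\<^sup>2 + (cos (a + t))\<^sup>2) - 2 * (cos (a + t) * cos a + sin (a + t) * sin a)"
    by (simp add: power2_eq_square algebra_simps)
  also have "cos (a + t) * cos a + sin (a + t) * sin a = cos t" using cos_diff[of "a + t" a] by simp
  finally show ?thesis by simp
qed

lemma scaled_sum_power2_diff:
  "((r::real) * x - r * y)\<^sup>2 + (r * u - r * v)\<^sup>2 = r\<^sup>2 * ((x - y)\<^sup>2 + (u - v)\<^sup>2)"
  by (simp add: power2_eq_square algebra_simps)

lemma star_polygon_edge:
  assumes "0 < s" "2 * s \<le> n"
  shows "edist 2 (star_polygon n s i) (star_polygon n s (Suc i mod n)) = 1"
proof -
  let ?r = "star_radius n s" and ?\<theta> = "real i * star_angle n s" and ?\<alpha> = "star_angle n s"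
  have "n > 0" using assms by simp
  have suc: "real (Suc i) * ?\<alpha> = ?\<theta> + ?\<alpha>" by (simp add: algebra_simps)
  have "(\<Sum>l<2. (star_polygon n s i l - star_polygon n s (Suc i mod n) l)\<^sup>2) =
      (\<Sum>l<2. (star_polygon n s i l - star_polygon n s (Suc i) l)\<^sup>2)"
    by (simp only: star_polygon_mod[OF \<open>n > 0\<close>])
  also have "\<dots> = (?r * cos ?\<theta> - ?r * cos (?\<theta> + ?\<alpha>))\<^sup>2 + (?r * sin ?\<theta> - ?r * sin (?\<theta> + ?\<alpha>))\<^sup>2"
    unfolding star_polygon_def suc by (simp add: eval_nat_numeral)
  also have "\<dots> = ?r\<^sup>2 * ((cos ?\<theta> - cos (?\<theta> + ?\<alpha>))\<^sup>2 + (sin ?\<theta> - sin (?\<theta> + ?\<alpha>))\<^sup>2)"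
    by (rule scaled_sum_power2_diff)
  also have "\<dots> = ?r\<^sup>2 * (2 - 2 * cos ?\<alpha>)"
    by (simp only: chord_cos_sin)
  also have "cos ?\<alpha> = 1 - 2 * (sin (pi * real s / real n))\<^sup>2"
    using cos_double_sin[of "pi * real s / real n"] by (simp add: star_angle_def mult.assoc)
  also have "?r\<^sup>2 * (2 - 2 * (1 - 2 * (sin (pi * real s / real n))\<^sup>2)) = 1"
    using sin_star_pos[OF assms] by (simp add: star_radius_def power2_eq_square field_simps)
  finally show ?thesis by (simp add: edist_def)
qed

lemma star_polygon_inject:
  assumes "coprime n s" "n > 0" "star_radius n s \<noteq> 0"
    and "i < n" "i' < n" "star_polygon n s i = star_polygon n s i'"
  shows "i = i'"
proof -
  have "cos (real i * star_angle n s) = cos (real i' * star_angle n s)"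
    "sin (real i * star_angle n s) = sin (real i' * star_angle n s)"
    using fun_cong[OF assms(6), of 0] fun_cong[OF assms(6), of 1] assms(3)
    by (simp_all add: star_polygon_def)
  then obtain m :: int where "real i * star_angle n s = real i' * star_angle n s + 2 * pi * m"
    using sin_cos_eq_iff by metis
  hence "pi * (real i * real s * 2) = pi * ((of_int m * real n + real i' * real s) * 2)"
    using assms(2) by (simp add: star_angle_def field_simps)
  hence "real i * real s = real i' * real s + of_int m * real n"
    using pi_gt_zero by (metis mult_left_cancel less_irrefl mult_cancel_right zero_neq_numeral add.commute)
  hence "int i * int s = int i' * int s + m * int n"
    by (metis (mono_tags) of_int_eq_iff of_int_add of_int_mult of_int_of_nat_eq)
  hence "int n dvd (int i - int i') * int s" by (simp add: algebra_simps)
  moreover have "coprime (int n) (int s)" using assms(1) by simp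
  ultimately have "int n dvd int i - int i'" using coprime_dvd_mult_left_iff by blast
  show ?thesis
  proof (rule ccontr)
    assume "i \<noteq> i'"
    hence "int i - int i' \<noteq> 0" by simp
    from dvd_imp_le_int[OF this \<open>int n dvd int i - int i'\<close>] have "int n \<le> \<bar>int i - int i'\<bar>" by simp
    thus False using assms(4,5) by linarith
  qed
qed

text \<open>For \<open>n/6 < s \<le> n/2\<close> the star polygon has circumradius less than 1.\<close>
lemma exists_star_step:
  assumes "(n::nat) \<ge> 3" "n \<noteq> 6"
  shows "\<exists>s. 0 < s \<and> 2 * s \<le> n \<and> n < 6 * s \<and> coprime n s"
proof (cases "even n")
  case False
  then obtain m where m: "n = 2 * m + 1" by (metis oddE)
  have "coprime (2 * m + 1) m"
    using gcd_add_mult[of m 2 1] by (simp add: coprime_iff_gcd_eq_1 gcd.commute)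
  thus ?thesis using m assms by (intro exI[of _ m]) auto
next
  case True
  then obtain m where m: "n = 2 * m" by blast
  show ?thesis
  proof (cases "even m")
    case True
    define p where "p = m - 1"
    have p: "m = p + 1" "odd p" using m assms True by (auto simp: p_def)
    have "gcd p (2 * p + 2) = 1"
      using gcd_add_mult[of p 2 2] p(2) by (simp add: coprime_iff_gcd_eq_1[symmetric])
    hence "coprime n p" using m p by (simp add: coprime_iff_gcd_eq_1 gcd.commute algebra_simps)
    thus ?thesis using m p assms by (intro exI[of _ p]) auto
  next
    case False
    hence "m \<ge> 5" using m assms by presburger
    define p where "p = m - 2"
    have p: "m = p + 2" "odd p" using \<open>m \<ge> 5\<close> False by (auto simp: p_def)
    have "coprime p 2" using p(2) by simp
    hence "coprime p (2 ^ 2)" using coprime_power_right_iff by blast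
    hence "gcd p (2 * p + 4) = 1"
      using gcd_add_mult[of p 2 4] by (simp add: coprime_iff_gcd_eq_1)
    moreover have "n = 2 * p + 4" using m p by simp
    ultimately have "coprime n p" by (metis coprime_iff_gcd_eq_1 gcd.commute)
    thus ?thesis using m p assms \<open>m \<ge> 5\<close> by (intro exI[of _ p]) auto
  qed
qed

lemma small_star_polygon:
  assumes "n \<ge> 3" "n \<noteq> 6"
  obtains s where "0 < (star_radius n s)\<^sup>2" "(star_radius n s)\<^sup>2 < 1"
    and "\<And>i. i < n \<Longrightarrow> edist 2 (star_polygon n s i) (star_polygon n s (Suc i mod n)) = 1"
    and "\<And>i i'. i < n \<Longrightarrow> i' < n \<Longrightarrow> star_polygon n s i = star_polygon n s i' \<Longrightarrow> i = i'"
proof -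
  obtain s where s: "0 < s" "2 * s \<le> n" "n < 6 * s" "coprime n s"
    using exists_star_step[OF assms] by blast
  have "0 < star_radius n s" "star_radius n s < 1"
    using star_radius_pos star_radius_less_1 s by auto
  hence "0 < (star_radius n s)\<^sup>2" "(star_radius n s)\<^sup>2 < 1"
    by (simp_all add: power_less_one_iff)
  with that show thesis
    using star_polygon_edge[OF s(1,2)] star_polygon_inject[OF s(4)] \<open>n \<ge> 3\<close> by force
qed

lemma origin_not_on_unit_chord:
  fixes u v :: "nat \<Rightarrow> real"
  assumes "(\<Sum>l<D. (u l)\<^sup>2) = 1" "(\<Sum>l<D. (v l)\<^sup>2) = 1" "(\<Sum>l<D. (u l - v l)\<^sup>2) = 1"
  shows "\<not> on_segment (\<lambda>l. 0) u v"
proof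
  assume "on_segment (\<lambda>l. 0) u v"
  then obtain t where "(\<lambda>l::nat. 0::real) = (\<lambda>l. (1 - t) * u l + t * v l)"
    unfolding on_segment_def by blast
  hence "(\<Sum>l<D. ((1 - t) * u l + t * v l)\<^sup>2) = 0" by (metis power_zero_numeral sum.neutral)
  moreover have "(\<Sum>l<D. u l * v l) = 1/2" using assms by (simp add: sum_power2_diff)
  ultimately have "(1 - t)\<^sup>2 + t\<^sup>2 + t * (1 - t) = 0"
    using assms by (simp add: sum_power2_convex_combination)
  moreover have "(1 - t)\<^sup>2 + t\<^sup>2 + t * (1 - t) = (t - 1/2)\<^sup>2 + 3/4"
    by (simp add: power2_eq_square algebra_simps)
  moreover have "(t - 1/2)\<^sup>2 \<ge> 0" by simp
  ultimately show False by linarith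
qed

lemma not_on_segment_to_origin:
  fixes u w :: "nat \<Rightarrow> real"
  assumes "(\<Sum>l<D. (w l)\<^sup>2) = 1" "(\<Sum>l<D. (u l)\<^sup>2) = 1" "w \<noteq> u"
  shows "\<not> on_segment w u (\<lambda>l. 0)"
proof
  assume "on_segment w u (\<lambda>l. 0)"
  then obtain t where t: "0 \<le> t" "t \<le> 1" and w: "w = (\<lambda>l. (1 - t) * u l)"
    unfolding on_segment_def by auto
  have "(\<Sum>l<D. (w l)\<^sup>2) = (1 - t)\<^sup>2 * (\<Sum>l<D. (u l)\<^sup>2)"
    by (simp add: w power_mult_distrib sum_distrib_left)
  hence "(1 - t)\<^sup>2 = 1" using assms(1,2) by simp
  hence "t = 0" using t by (simp add: power2_eq_square algebra_simps)
  thus False using w assms(3) by simp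
qed

lemma wheel_6_1_embeddable_R2: "\<exists>f. unit_dist_embedding (wheel 6 1) 2 f"
proof -
  let ?c = "star_polygon 6 1"
  have "star_radius 6 1 = 1" by (simp add: star_radius_def sin_30)
  hence norm: "\<And>i. (\<Sum>l<2. (?c i l)\<^sup>2) = 1" using sum_power2_star_polygon by simp
  have edge: "\<And>i. edist 2 (?c i) (?c (Suc i mod 6)) = 1" by (rule star_polygon_edge) simp_all
  have inj: "\<And>i i'. i < 6 \<Longrightarrow> i' < 6 \<Longrightarrow> ?c i = ?c i' \<Longrightarrow> i = i'"
    by (rule star_polygon_inject) (use \<open>star_radius 6 1 = 1\<close> in simp_all)
  have "unit_dist_embedding (wheel 6 1) 2 (case_sum ?c (\<lambda>j l. 0))"
  proof (rule wheel_embeddingI)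
    fix i w :: nat assume "i < 6" "w < 6" "w \<noteq> i" "w \<noteq> Suc i mod 6"
    moreover have "Suc i mod 6 < 6" "i \<noteq> Suc i mod 6" using \<open>i < 6\<close> by (auto simp: mod_Suc)
    ultimately show "\<not> on_segment (?c w) (?c i) (?c (Suc i mod 6))"
      using not_on_segment_sphere[OF in_Rn_star_polygon in_Rn_star_polygon norm norm norm] inj
      by metis
  next
    fix i j :: nat
    show "\<not> on_segment (\<lambda>l. 0) (?c i) (?c (Suc i mod 6))"
      using edge[of i] by (intro origin_not_on_unit_chord[OF norm norm]) (simp add: edist_def)
    show "edist 2 (?c i) (\<lambda>l. 0) = 1" using norm[of i] by (simp add: edist_def)
    show "\<not> on_segment (?c w) (?c i) (\<lambda>l. 0)" if "i < 6" "w < 6" "w \<noteq> i" for w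
      using inj that by (intro not_on_segment_to_origin[OF norm norm]) blast
    show "?c i \<noteq> (\<lambda>l. 0)" using norm[of i] by auto
  qed (use edge inj in_Rn_star_polygon in \<open>auto simp: in_Rn_def\<close>)
  thus ?thesis by blast
qed

lemma wheel_6_2_embeddable_R4: "\<exists>f. unit_dist_embedding (wheel 6 2) 4 f"
proof -
  have "unit_dist_embedding (wheel 6 2) 4 (case_sum skew_hexagon (hub_pair (1/2) 3))"
    by (rule wheel_embedding_orthogonal_spheres[where a = 3 and R = "3/4"])
      (use hub_pair_inject[of "1/2"] in
        \<open>auto simp: skew_hexagon hub_pair_low sum_power2_hub_pair power_divide
          intro: in_Rn_mono[OF in_Rn_hub_pair]\<close>)
  thus ?thesis by blast
qed

lemma wheel_6_embeddable_R5: "\<exists>f. unit_dist_embedding (wheel 6 k) 5 f"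
proof -
  have "unit_dist_embedding (wheel 6 k) 5 (case_sum skew_hexagon (hub_circle (1/2) 3))"
    by (rule wheel_embedding_orthogonal_spheres[where a = 3 and R = "3/4"])
      (use hub_circle_inject[of "1/2"] in
        \<open>auto simp: skew_hexagon hub_circle_low sum_power2_hub_circle power_divide
          intro: in_Rn_mono[OF in_Rn_hub_circle]\<close>)
  thus ?thesis by blast
qed

lemma wheel_embeddable_R3:
  assumes "n \<ge> 3" "n \<noteq> 6" "k \<le> 2"
  shows "\<exists>f. unit_dist_embedding (wheel n k) 3 f"
proof -
  obtain s where s: "0 < (star_radius n s)\<^sup>2" "(star_radius n s)\<^sup>2 < 1"
    "\<And>i. i < n \<Longrightarrow> edist 2 (star_polygon n s i) (star_polygon n s (Suc i mod n)) = 1"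
    "\<And>i i'. i < n \<Longrightarrow> i' < n \<Longrightarrow> star_polygon n s i = star_polygon n s i' \<Longrightarrow> i = i'"
    using small_star_polygon[OF assms(1,2)] by blast
  define \<rho> where "\<rho> = sqrt (1 - (star_radius n s)\<^sup>2)"
  have \<rho>: "\<rho> \<noteq> 0" "\<rho>\<^sup>2 = 1 - (star_radius n s)\<^sup>2" using s(2) by (simp_all add: \<rho>_def)
  have "unit_dist_embedding (wheel n k) 3 (case_sum (star_polygon n s) (hub_pair \<rho> 2))"
    by (rule wheel_embedding_orthogonal_spheres[where a = 2 and R = "(star_radius n s)\<^sup>2"])
      (use assms s \<rho> hub_pair_inject[OF \<rho>(1)] in
        \<open>auto simp: in_Rn_star_polygon sum_power2_star_polygon hub_pair_low sum_power2_hub_pair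
          intro: in_Rn_mono[OF in_Rn_hub_pair]\<close>)
  thus ?thesis by blast
qed

lemma wheel_embeddable_R4:
  assumes "n \<ge> 3" "n \<noteq> 6"
  shows "\<exists>f. unit_dist_embedding (wheel n k) 4 f"
proof -
  obtain s where s: "0 < (star_radius n s)\<^sup>2" "(star_radius n s)\<^sup>2 < 1"
    "\<And>i. i < n \<Longrightarrow> edist 2 (star_polygon n s i) (star_polygon n s (Suc i mod n)) = 1"
    "\<And>i i'. i < n \<Longrightarrow> i' < n \<Longrightarrow> star_polygon n s i = star_polygon n s i' \<Longrightarrow> i = i'"
    using small_star_polygon[OF assms] by blast
  define \<rho> where "\<rho> = sqrt (1 - (star_radius n s)\<^sup>2)"
  have \<rho>: "\<rho> \<noteq> 0" "\<rho>\<^sup>2 = 1 - (star_radius n s)\<^sup>2" using s(2) by (simp_all add: \<rho>_def)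
  have "unit_dist_embedding (wheel n k) 4 (case_sum (star_polygon n s) (hub_circle \<rho> 2))"
    by (rule wheel_embedding_orthogonal_spheres[where a = 2 and R = "(star_radius n s)\<^sup>2"])
      (use assms s \<rho> hub_circle_inject[OF \<rho>(1)] in
        \<open>auto simp: in_Rn_star_polygon sum_power2_star_polygon hub_circle_low sum_power2_hub_circle
          intro: in_Rn_mono[OF in_Rn_hub_circle]\<close>)
  thus ?thesis by blast
qed

theorem mainTheorem7:
  shows "graph_dim (wheel 6 1) = 2 \<and> (\<forall>n\<ge>3. n \<noteq> 6 \<longrightarrow> graph_dim (wheel n 1) = 3) \<and>
         graph_dim (wheel 6 2) = 4 \<and> (\<forall>n\<ge>3. n \<noteq> 6 \<longrightarrow> graph_dim (wheel n 2) = 3) \<and>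
         (\<forall>k\<ge>3. graph_dim (wheel 6 k) = 5 \<and> (\<forall>n\<ge>3. n \<noteq> 6 \<longrightarrow> graph_dim (wheel n k) = 4))"
proof (intro conjI allI impI)
  show "graph_dim (wheel 6 1) = 2"
    using wheel_6_1_embeddable_R2 no_wheel_embedding_R1[of 6 1] by (intro graph_dim_eqI) simp_all
  show "graph_dim (wheel 6 2) = 4"
    using wheel_6_2_embeddable_R4 no_wheel_6_2_embedding_R3 by (intro graph_dim_eqI) simp_all
  fix n :: nat assume n: "n \<ge> 3" "n \<noteq> 6"
  show "graph_dim (wheel n 1) = 3" "graph_dim (wheel n 2) = 3"
    using wheel_embeddable_R3[OF n] no_wheel_embedding_R2[OF n] by (intro graph_dim_eqI; simp)+
next
  fix k :: nat assume k: "k \<ge> 3"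
  show "graph_dim (wheel 6 k) = 5"
    using wheel_6_embeddable_R5 no_wheel_6_embedding_R4[OF k] by (intro graph_dim_eqI) simp_all
  fix n :: nat assume n: "n \<ge> 3" "n \<noteq> 6"
  show "graph_dim (wheel n k) = 4"
    using wheel_embeddable_R4[OF n] no_wheel_embedding_R3[OF n(1) k] by (intro graph_dim_eqI) simp_all
qed

end
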